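(* Let $d\ge1$, $L\ge1$, $1\le q<d$. For every integer $T\ge(2L)^d$, $\mathbb{D}_{\mathrm{onl}}(\mathcal{H}_L)\ge(2L)^qT^{1-q/d}$ (with respect to the loss $\ell_q$). In particular $\mathbb{D}_{\mathrm{onl}}(\mathcal{H}_L)=\infty$.
   Context: $\mathcal{X}=[-1,1]^d$, $\mathcal{Y}=[0,1]$, $\mathcal{H}_L=\{h:\mathcal X\to[0,1]:|h(x)-h(x')|\le L\|x-x'\|_\infty\}$, loss $\ell_q(y,y')=|y-y'|^q$. Scaled Littlestone tree of depth $D\le\infty$: internal nodes $u\in\{0,1\}^{<D}$ labeled $x_u\in\mathcal X$, edges labeled $s_{u,0},s_{u,1}\in\mathcal{Y}$, gap $\gamma_u=\ell_q(s_{u,0},s_{u,1})$; realizable by $\mathcal{H}_L$ if for every branch $b$ and finite $n\le D$ some $h\in\mathcal{H}_L$ has $h(x_{b_{\le t}})=s_{b_{\le t},b_{t+1}}$ for $t<n$ ($b_{\le t}$ the length-$t$ prefix). $\mathbb{D}_{\mathrm{onl}}(\mathcal{H}_L)=\sup_{\mathcal T}\inf_b\sum_t\gamma_{b_{\le t}}$ over realizable trees and their branches. *)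

theory Defs
  imports "HOL-Analysis.Analysis"
begin

text \<open>Instance space X = [-1,1]^d, with d = CARD('n) and points in real^'n.\<close>
definition cube :: "(real^'n) set" where
  "cube = {x. \<forall>i. \<bar>x $ i\<bar> \<le> 1}"

text \<open>H_L: functions X -> [0,1] that are L-Lipschitz w.r.t. the sup norm (infnorm).
  Functions are total in HOL; only their values on X matter.\<close>
definition lip_class :: "real \<Rightarrow> (real^'n \<Rightarrow> real) set" where
  "lip_class L = {h. (\<forall>x\<in>cube. 0 \<le> h x \<and> h x \<le> 1) \<and>
      (\<forall>x\<in>cube. \<forall>x'\<in>cube. \<bar>h x - h x'\<bar> \<le> L * infnorm (x - x'))}"

definition lossq :: "real \<Rightarrow> real \<Rightarrow> real \<Rightarrow> real" where
  "lossq q y y' = \<bar>y - y'\<bar> powr q"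

text \<open>Prefix b_{<=t} of a branch b (bits b 0, ..., b (t-1)); node = bool list
  (False = 0, True = 1).\<close>
definition pre :: "(nat \<Rightarrow> bool) \<Rightarrow> nat \<Rightarrow> bool list" where
  "pre b t = map b [0..<t]"

text \<open>A scaled Littlestone tree of depth D (enat, possibly infinite) is given by
  node labels xl u and edge labels sl u c (c = child bit), for nodes u with length u < D.
  Realizability by H_L.\<close>
definition realizable ::
  "real \<Rightarrow> enat \<Rightarrow> (bool list \<Rightarrow> real^'n) \<Rightarrow> (bool list \<Rightarrow> bool \<Rightarrow> real) \<Rightarrow> bool" where
  "realizable L D xl sl \<longleftrightarrow>
     (\<forall>u. enat (length u) < D \<longrightarrow>
         xl u \<in> cube \<and> sl u False \<in> {0..1} \<and> sl u True \<in> {0..1}) \<and>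
     (\<forall>b n. enat n \<le> D \<longrightarrow>
         (\<exists>h\<in>lip_class L. \<forall>t<n. h (xl (pre b t)) = sl (pre b t) (b t)))"

definition branch_gap :: "real \<Rightarrow> enat \<Rightarrow> (bool list \<Rightarrow> bool \<Rightarrow> real) \<Rightarrow> (nat \<Rightarrow> bool) \<Rightarrow> ennreal" where
  "branch_gap q D sl b =
     (\<Sum>t. if enat t < D then ennreal (lossq q (sl (pre b t) False) (sl (pre b t) True)) else 0)"

definition D_onl :: "'n::finite itself \<Rightarrow> real \<Rightarrow> real \<Rightarrow> ennreal" where
  "D_onl _ L q = (SUP T \<in> {(D, xl, sl). realizable L D (xl :: bool list \<Rightarrow> real^'n) sl}.
       (case T of (D, xl, sl) \<Rightarrow> (INF b. branch_gap q D sl b)))"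

end

theory Submission
  imports Defs
begin

text \<open>Split the cube into \<open>N\<^sup>d\<close> subcubes of side \<open>2/N\<close> and query their centres one
  after the other, with edge labels \<open>0\<close> and \<open>1/N\<close>. Any labelling of the centres is realized
  by the maximum of the \<open>L\<close>-Lipschitz tents of height \<open>1/N\<close> around the centres labelled
  \<open>1/N\<close>: for \<open>L \<ge> 1\<close> these tents vanish at all other centres, which are \<open>2/N\<close> away in the
  sup norm. Every branch then has cumulative gap \<open>N\<^sup>d (1/N)\<^sup>q = N\<^sup>d\<^sup>-\<^sup>q\<close>, which is unbounded
  for \<open>q < d\<close>. So the online dimension is infinite, which makes the quantitative lower bound
  immediate.\<close>

lemma Max_insert_0_image_le:
  fixes f :: "'b \<Rightarrow> 'a \<Rightarrow> real"
  assumes "finite S" "\<And>t. t \<in> S \<Longrightarrow> f t x \<le> f t y + d" "0 \<le> d"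
  shows "Max (insert 0 ((\<lambda>t. f t x) ` S)) \<le> Max (insert 0 ((\<lambda>t. f t y) ` S)) + d"
proof -
  let ?My = "Max (insert 0 ((\<lambda>t. f t y) ` S))"
  have My_ge: "a \<le> ?My" if "a \<in> insert 0 ((\<lambda>t. f t y) ` S)" for a
    using assms(1) that by (intro Max_ge) auto
  have "f t x \<le> ?My + d" if "t \<in> S" for t
  proof -
    have "f t y \<le> ?My" using that by (intro My_ge) blast
    then show ?thesis using assms(2)[OF that] by linarith
  qed
  moreover have "0 \<le> ?My + d" using My_ge[of 0] assms(3) by simp
  ultimately show ?thesis
    using assms(1) by (subst Max_le_iff) auto
qed

lemma Max_insert_0_image_abs_diff_le:
  fixes f :: "'b \<Rightarrow> 'a \<Rightarrow> real"
  assumes "finite S" "\<And>t. t \<in> S \<Longrightarrow> \<bar>f t x - f t y\<bar> \<le> d" "0 \<le> d"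
  shows "\<bar>Max (insert 0 ((\<lambda>t. f t x) ` S)) - Max (insert 0 ((\<lambda>t. f t y) ` S))\<bar> \<le> d"
proof -
  have le: "f t x \<le> f t y + d" "f t y \<le> f t x + d" if "t \<in> S" for t
    using assms(2)[OF that] by (auto simp: abs_le_iff)
  have "Max (insert 0 ((\<lambda>t. f t x) ` S)) \<le> Max (insert 0 ((\<lambda>t. f t y) ` S)) + d"
    using Max_insert_0_image_le[of S f x y d] le(1) assms by blast
  moreover have "Max (insert 0 ((\<lambda>t. f t y) ` S)) \<le> Max (insert 0 ((\<lambda>t. f t x) ` S)) + d"
    using Max_insert_0_image_le[of S f y x d] le(2) assms by blast
  ultimately show ?thesis by linarith
qed

definition tent :: "real \<Rightarrow> real \<Rightarrow> real^'n \<Rightarrow> real^'n \<Rightarrow> real" where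
  "tent L c p x = max 0 (c - L * infnorm (x - p))"

lemma tent_le: "0 \<le> L \<Longrightarrow> 0 \<le> c \<Longrightarrow> tent L c p x \<le> c"
  by (simp add: tent_def infnorm_pos_le)

lemma tent_at_centre: "0 \<le> c \<Longrightarrow> tent L c p p = c"
  by (simp add: tent_def infnorm_0)

lemma tent_eq_0: "c \<le> L * infnorm (x - p) \<Longrightarrow> tent L c p x = 0"
  by (simp add: tent_def)

lemma tent_lipschitz:
  assumes "0 \<le> L"
  shows "\<bar>tent L c p x - tent L c p y\<bar> \<le> L * infnorm (x - y)"
proof -
  have "\<bar>infnorm (x - p) - infnorm (y - p)\<bar> \<le> infnorm (x - y)"
    using absdiff_infnorm[of "x - p" "y - p"] by simp
  then have "\<bar>L * infnorm (x - p) - L * infnorm (y - p)\<bar> \<le> L * infnorm (x - y)"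
    using assms by (metis abs_mult abs_of_nonneg mult_left_mono right_diff_distrib)
  then show ?thesis
    unfolding tent_def by linarith
qed

lemma realizable_separated_tent_tree:
  fixes p :: "nat \<Rightarrow> real^'n"
  assumes L: "0 \<le> L" and c: "0 < c" "c \<le> 1"
    and p_cube: "\<And>t. t < T \<Longrightarrow> p t \<in> cube"
    and p_sep: "\<And>s t. s < T \<Longrightarrow> t < T \<Longrightarrow> s \<noteq> t \<Longrightarrow> 2 * c \<le> L * infnorm (p s - p t)"
  shows "realizable L (enat T) (\<lambda>u. p (length u)) (\<lambda>u b. if b then c else 0)"
  unfolding realizable_def
proof (intro conjI allI impI)
  fix u :: "bool list"
  assume "enat (length u) < enat T"
  then show "p (length u) \<in> cube" using p_cube by simp
  show "(if False then c else 0) \<in> {0..1}" "(if True then c else 0) \<in> {0..1}"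
    using c by auto
next
  fix b :: "nat \<Rightarrow> bool" and n
  assume "enat n \<le> enat T"
  then have nT: "n \<le> T" by simp
  define S where "S = {t. t < n \<and> b t}"
  have finS: "finite S" unfolding S_def by simp
  define h where "h x = Max (insert 0 ((\<lambda>t. tent L c (p t) x) ` S))" for x
  have h_nonneg: "0 \<le> h x" for x
    unfolding h_def using finS by (intro Max_ge) auto
  have h_le: "h x \<le> c" for x
    unfolding h_def using finS c tent_le[OF L, of c] by (subst Max_le_iff) auto
  have "h \<in> lip_class L"
    unfolding lip_class_def
  proof (intro CollectI conjI ballI)
    fix x x' :: "real^'n"
    show "0 \<le> h x" "h x \<le> 1" using h_nonneg h_le[of x] c by auto
    show "\<bar>h x - h x'\<bar> \<le> L * infnorm (x - x')"
      unfolding h_def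
      using finS tent_lipschitz[OF L] L infnorm_pos_le[of "x - x'"]
      by (intro Max_insert_0_image_abs_diff_le) simp_all
  qed
  moreover have "h (p t) = (if b t then c else 0)" if "t < n" for t
  proof (cases "b t")
    case True
    then have "t \<in> S" using that by (simp add: S_def)
    then have "tent L c (p t) (p t) \<le> h (p t)"
      unfolding h_def using finS by (intro Max_ge) auto
    then have "c \<le> h (p t)"
      using tent_at_centre[of c L "p t"] c by simp
    then show ?thesis using h_le True by (simp add: order_antisym)
  next
    case False
    have "tent L c (p s) (p t) = 0" if "s \<in> S" for s
    proof (rule tent_eq_0)
      have "s \<noteq> t" "s < T" "t < T" using \<open>s \<in> S\<close> \<open>t < n\<close> False nT by (auto simp: S_def)
      then show "c \<le> L * infnorm (p t - p s)" using p_sep[of t s] c by simp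
    qed
    then have "h (p t) \<le> 0"
      unfolding h_def using finS by (subst Max_le_iff) auto
    then show ?thesis using h_nonneg[of "p t"] False by simp
  qed
  moreover have "length (pre b t) = t" for t
    by (simp add: pre_def)
  ultimately show "\<exists>h\<in>lip_class L. \<forall>t<n. h (p (length (pre b t))) =
      (if b t then c else 0)"
    by metis
qed

lemma branch_gap_zero_or_c:
  assumes "0 \<le> c"
  shows "branch_gap q (enat T) (\<lambda>u b. if b then c else 0) br = ennreal (real T * c powr q)"
proof -
  have "branch_gap q (enat T) (\<lambda>u b. if b then c else 0) br = (\<Sum>t<T. ennreal (c powr q))"
    unfolding branch_gap_def
    by (subst suminf_finite[of "{..<T}"]) (use assms in \<open>auto simp: lossq_def\<close>)
  also have "\<dots> = ennreal (real T * c powr q)"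
    by (simp add: ennreal_of_nat_eq_real_of_nat ennreal_mult)
  finally show ?thesis .
qed

lemma INF_branch_gap_le_D_onl:
  fixes xl :: "bool list \<Rightarrow> real^'n::finite"
  assumes "realizable L D xl sl"
  shows "(INF b. branch_gap q D sl b) \<le> D_onl TYPE('n) L q"
  unfolding D_onl_def by (rule SUP_upper2[where i="(D, xl, sl)"]) (use assms in auto)

definition grid_point :: "nat \<Rightarrow> ('n \<Rightarrow> nat) \<Rightarrow> real^'n" where
  "grid_point N k = (\<chi> i. -1 + (2 * real (k i) + 1) / real N)"

lemma grid_point_in_cube:
  assumes "\<And>i. k i < N"
  shows "grid_point N k \<in> cube"
proof -
  have "real (k i) + 1 \<le> real N" for i
    using assms[of i] by linarith
  then have "\<bar>-1 + (2 * real (k i) + 1) / real N\<bar> \<le> 1" for i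
    using assms[of i] by (auto simp: abs_le_iff field_simps)
  then show ?thesis unfolding cube_def grid_point_def by simp
qed

lemma grid_point_separated:
  assumes "k \<noteq> k'"
  shows "2 / real N \<le> infnorm (grid_point N k - grid_point N k')"
proof -
  obtain i where i: "k i \<noteq> k' i" using assms by auto
  have "(grid_point N k - grid_point N k') $ i = 2 * (real (k i) - real (k' i)) / real N"
    by (simp add: grid_point_def add_divide_distrib diff_divide_distrib algebra_simps)
  then have "\<bar>(grid_point N k - grid_point N k') $ i\<bar> = 2 * \<bar>real (k i) - real (k' i)\<bar> / real N"
    by (simp only: abs_divide abs_mult abs_numeral abs_of_nat)
  also have "\<dots> \<ge> 2 / real N"
    using i by (intro divide_right_mono) (auto simp: abs_if)
  finally show ?thesis
    using component_le_infnorm_cart order_trans by blast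
qed

lemma D_onl_ge_grid:
  fixes N :: nat
  assumes L: "1 \<le> L" and N: "1 \<le> N"
  shows "ennreal (real N powr (real CARD('n) - q)) \<le> D_onl TYPE('n::finite) L q"
proof -
  define K where "K = PiE (UNIV :: 'n set) (\<lambda>_. {..<N})"
  define T where "T = card K"
  have "finite K" by (simp add: K_def finite_PiE)
  then obtain e where e: "bij_betw e {0..<T} K"
    using ex_bij_betw_nat_finite unfolding T_def by blast
  define c where "c = 1 / real N"
  have c: "0 < c" "c \<le> 1" using N by (auto simp: c_def)
  have "realizable L (enat T) (\<lambda>u. grid_point N (e (length u))) (\<lambda>u b. if b then c else 0)"
  proof (rule realizable_separated_tent_tree)
    show "grid_point N (e t) \<in> cube" if "t < T" for t
      using bij_betwE[OF e] that by (intro grid_point_in_cube) (auto simp: K_def PiE_iff)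
    show "2 * c \<le> L * infnorm (grid_point N (e s) - grid_point N (e t))"
      if "s < T" "t < T" "s \<noteq> t" for s t
    proof -
      have "e s \<noteq> e t" using e that by (auto simp: bij_betw_def inj_on_def)
      then have "2 * c \<le> infnorm (grid_point N (e s) - grid_point N (e t))"
        using grid_point_separated by (simp add: c_def)
      also have "\<dots> \<le> L * infnorm (grid_point N (e s) - grid_point N (e t))"
        using L infnorm_pos_le[of "grid_point N (e s) - grid_point N (e t)"]
        by (simp add: mult_le_cancel_right1)
      finally show ?thesis .
    qed
  qed (use L c in auto)
  then have "(INF b. branch_gap q (enat T) (\<lambda>u b. if b then c else 0) b) \<le> D_onl TYPE('n) L q"
    by (rule INF_branch_gap_le_D_onl)
  then have "ennreal (real T * c powr q) \<le> D_onl TYPE('n) L q"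
    using branch_gap_zero_or_c[of c q T] c by simp
  moreover have "real T * c powr q = real N powr (real CARD('n) - q)"
    using N by (simp add: T_def K_def card_PiE c_def powr_realpow powr_divide powr_diff)
  ultimately show ?thesis by simp
qed

lemma D_onl_eq_top:
  assumes "1 \<le> L" and "q < real CARD('n::finite)"
  shows "D_onl TYPE('n) L q = \<infinity>"
proof (rule ccontr)
  define e where "e = real CARD('n) - q"
  have e: "0 < e" using assms(2) by (simp add: e_def)
  assume "D_onl TYPE('n) L q \<noteq> \<infinity>"
  then obtain n :: nat where n: "D_onl TYPE('n) L q < of_nat n"
    using ennreal_Ex_less_of_nat by (auto simp: top.not_eq_extremum)
  obtain N :: nat where N: "real n powr (1 / e) \<le> real N" "1 \<le> N"
    by (metis real_arch_simple max.cobounded1 max.cobounded2 of_nat_le_iff order_trans)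
  have "real n = (real n powr (1 / e)) powr e" using e by (simp add: powr_powr)
  also have "\<dots> \<le> real N powr e" using N e by (intro powr_mono2) auto
  finally have "of_nat n \<le> ennreal (real N powr e)"
    by (simp add: ennreal_of_nat_eq_real_of_nat)
  also have "\<dots> \<le> D_onl TYPE('n) L q"
    unfolding e_def by (rule D_onl_ge_grid[OF assms(1) N(2)])
  finally show False using n leD by blast
qed

theorem theoremA8:
  fixes L q :: real
  assumes "L \<ge> 1" and "1 \<le> q" and "q < real CARD('n::finite)"
  shows "(\<forall>T::nat. real T \<ge> (2 * L) ^ CARD('n) \<longrightarrow>
            D_onl TYPE('n) L q \<ge> ennreal ((2 * L) powr q * real T powr (1 - q / real CARD('n))))
         \<and> D_onl TYPE('n) L q = \<infinity>"
  using D_onl_eq_top[OF assms(1,3)] by simp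

end
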